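(* Let $\mathbb{K}$ be an algebraically closed field of characteristic zero, let $D$ be a derivation of $\mathbb{K}[x,y]$ and let $\rho\in\mathrm{Aut}(D)$. Suppose $\rho(\mathfrak{m})=\mathfrak{m}$ for a maximal ideal $\mathfrak{m}$ of $\mathbb{K}[x,y]$ which is not stable under $D$ (i.e. $D(\mathfrak{m})\not\subseteq\mathfrak{m}$). Then there exists a principal ideal $\mathfrak{a}\subseteq\mathfrak{m}$ (possibly $\mathfrak{a}=(0)$) such that: (a) $D(\mathfrak{a})\subseteq\mathfrak{a}$ and $\rho(\mathfrak{a})=\mathfrak{a}$; (b) $\rho$ induces the identity map on $\mathbb{K}[x,y]/\mathfrak{a}$, i.e. $\rho(g)-g\in\mathfrak{a}$ for all $g\in\mathbb{K}[x,y]$.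
   Context: A derivation of $\mathbb{K}[x,y]$ is a $\mathbb{K}$-linear map $D$ with $D(fg)=gD(f)+fD(g)$. $\mathrm{Aut}(D)$ denotes the group of $\mathbb{K}$-algebra automorphisms $\rho$ of $\mathbb{K}[x,y]$ with $\rho D=D\rho$. *)

theory Defs
  imports "HOL-Computational_Algebra.Polynomial"
begin

text \<open>The bivariate polynomial ring K[x,y] is represented as K[x][y], i.e. the type
  'a poly poly. Scalars c of K embed as the constant polynomial [:[:c:]:].\<close>

definition const2 :: "'a::comm_ring_1 \<Rightarrow> 'a poly poly" where
  "const2 c = [:[:c:]:]"

definition is_derivation :: "('a::comm_ring_1 poly poly \<Rightarrow> 'a poly poly) \<Rightarrow> bool" where
  "is_derivation D \<longleftrightarrow>
     (\<forall>f g. D (f + g) = D f + D g) \<and>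
     (\<forall>c f. D (const2 c * f) = const2 c * D f) \<and>
     (\<forall>f g. D (f * g) = g * D f + f * D g)"

definition is_K_alg_aut :: "('a::comm_ring_1 poly poly \<Rightarrow> 'a poly poly) \<Rightarrow> bool" where
  "is_K_alg_aut \<rho> \<longleftrightarrow>
     bij \<rho> \<and>
     (\<forall>f g. \<rho> (f + g) = \<rho> f + \<rho> g) \<and>
     (\<forall>f g. \<rho> (f * g) = \<rho> f * \<rho> g) \<and>
     (\<forall>c. \<rho> (const2 c) = const2 c)"

definition Aut_der :: "('a::comm_ring_1 poly poly \<Rightarrow> 'a poly poly) \<Rightarrow> ('a poly poly \<Rightarrow> 'a poly poly) set" where
  "Aut_der D = {\<rho>. is_K_alg_aut \<rho> \<and> \<rho> \<circ> D = D \<circ> \<rho>}"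

definition is_ideal :: "'a::comm_ring_1 set \<Rightarrow> bool" where
  "is_ideal I \<longleftrightarrow> 0 \<in> I \<and> (\<forall>a\<in>I. \<forall>b\<in>I. a + b \<in> I) \<and> (\<forall>a\<in>I. \<forall>r. r * a \<in> I)"

definition is_maximal_ideal :: "'a::comm_ring_1 set \<Rightarrow> bool" where
  "is_maximal_ideal M \<longleftrightarrow> is_ideal M \<and> M \<noteq> UNIV \<and>
     (\<forall>J. is_ideal J \<and> M \<subseteq> J \<longrightarrow> J = M \<or> J = UNIV)"

definition principal_ideal :: "'a::comm_ring_1 \<Rightarrow> 'a set" where
  "principal_ideal p = {p * r | r. True}"

end

theory Submission
  imports Defs "HOL-Computational_Algebra.Formal_Power_Series"
begin

(*
  By the Nullstellensatz m is the ideal of a point (a, b). Put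
  T f = \<Sum>\<^sub>k (D\<^sup>k f)(a, b) t\<^sup>k / k! in K[[t]]. The Leibniz rule makes T a ring homomorphism
  with T (D f) = (T f)', and T (\<rho> f) = T f because \<rho> commutes with D and fixes (a, b).
  So the kernel of T is a D-stable, \<rho>-stable prime ideal inside m containing every \<rho> g - g.
  As D(m) is not contained in m, D x or D y does not vanish at (a, b); then T (x - c) \<noteq> 0
  (resp. T (y - c) \<noteq> 0) for every c, so the kernel contains no nonzero polynomial in x alone
  (resp. y alone), and a prime ideal of K[x][y] with this property is principal: it is
  generated by an element of minimal y-degree, via pseudo-division.
*)

section \<open>Ideals\<close>

lemma ideal_zero: "is_ideal I \<Longrightarrow> 0 \<in> I"
  unfolding is_ideal_def by blast

lemma ideal_add: "is_ideal I \<Longrightarrow> a \<in> I \<Longrightarrow> b \<in> I \<Longrightarrow> a + b \<in> I"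
  unfolding is_ideal_def by blast

lemma ideal_mult_left: "is_ideal I \<Longrightarrow> a \<in> I \<Longrightarrow> r * a \<in> I"
  unfolding is_ideal_def by blast

lemma ideal_mult_right: "is_ideal I \<Longrightarrow> a \<in> I \<Longrightarrow> a * r \<in> I"
  by (metis ideal_mult_left mult.commute)

lemma ideal_diff: "is_ideal I \<Longrightarrow> a \<in> I \<Longrightarrow> b \<in> I \<Longrightarrow> a - b \<in> I"
  using ideal_add[of I a "- 1 * b"] ideal_mult_left[of I b "- 1"] by simp

lemma maximal_ideal_is_ideal: "is_maximal_ideal m \<Longrightarrow> is_ideal m"
  unfolding is_maximal_ideal_def by blast

lemma maximal_ideal_one_notin: "is_maximal_ideal m \<Longrightarrow> 1 \<notin> m"
  unfolding is_maximal_ideal_def using ideal_mult_right[of m 1] by auto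

lemma maximal_ideal_inverse_mod:
  assumes m: "is_maximal_ideal m" and a: "a \<notin> m"
  shows "\<exists>u. 1 - u * a \<in> m"
proof -
  have m_ideal: "is_ideal m"
    using m by (rule maximal_ideal_is_ideal)
  define J where "J = {x + r * a |x r. x \<in> m}"
  have "is_ideal J"
    unfolding is_ideal_def J_def
  proof (intro conjI ballI allI)
    show "0 \<in> {x + r * a |x r. x \<in> m}"
      using ideal_zero[OF m_ideal] by (intro CollectI exI[of _ 0] exI[of _ 0]) simp
    fix u v assume "u \<in> {x + r * a |x r. x \<in> m}" "v \<in> {x + r * a |x r. x \<in> m}"
    then obtain x r x' r' where "u = x + r * a" "v = x' + r' * a" "x \<in> m" "x' \<in> m"
      by blast
    then show "u + v \<in> {x + r * a |x r. x \<in> m}"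
      by (intro CollectI exI[of _ "x + x'"] exI[of _ "r + r'"])
        (simp add: algebra_simps ideal_add[OF m_ideal])
  next
    fix u s assume "u \<in> {x + r * a |x r. x \<in> m}"
    then obtain x r where "u = x + r * a" "x \<in> m"
      by blast
    then show "s * u \<in> {x + r * a |x r. x \<in> m}"
      by (intro CollectI exI[of _ "s * x"] exI[of _ "s * r"])
        (simp add: algebra_simps ideal_mult_left[OF m_ideal])
  qed
  moreover have "m \<subseteq> J"
    unfolding J_def by (force intro: exI[of _ 0])
  moreover have "a \<in> J"
    unfolding J_def using ideal_zero[OF m_ideal] by (intro CollectI exI[of _ 0] exI[of _ 1]) simp
  ultimately have "1 \<in> J"
    using m a unfolding is_maximal_ideal_def by blast
  then obtain x r where "1 = x + r * a" "x \<in> m"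
    unfolding J_def by blast
  then show ?thesis
    by (metis add_diff_cancel_right')
qed

lemma maximal_ideal_iff_inverse_mod:
  "is_maximal_ideal m \<longleftrightarrow> is_ideal m \<and> 1 \<notin> m \<and> (\<forall>a. a \<notin> m \<longrightarrow> (\<exists>u. 1 - u * a \<in> m))"
proof
  assume "is_maximal_ideal m"
  then show "is_ideal m \<and> 1 \<notin> m \<and> (\<forall>a. a \<notin> m \<longrightarrow> (\<exists>u. 1 - u * a \<in> m))"
    using maximal_ideal_is_ideal maximal_ideal_one_notin maximal_ideal_inverse_mod by blast
next
  assume m: "is_ideal m \<and> 1 \<notin> m \<and> (\<forall>a. a \<notin> m \<longrightarrow> (\<exists>u. 1 - u * a \<in> m))"
  have "J = UNIV" if J: "is_ideal J" "m \<subseteq> J" "J \<noteq> m" for J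
  proof -
    obtain a u where "a \<in> J" "1 - u * a \<in> m"
      using J m by blast
    then have "(1 - u * a) + u * a \<in> J"
      using J by (meson ideal_add ideal_mult_left subsetD)
    then show ?thesis
      using J(1) ideal_mult_right[of J 1] by auto
  qed
  then show "is_maximal_ideal m"
    using m unfolding is_maximal_ideal_def by blast
qed

definition is_prime_ideal :: "'a::comm_ring_1 set \<Rightarrow> bool" where
  "is_prime_ideal P \<longleftrightarrow> is_ideal P \<and> 1 \<notin> P \<and> (\<forall>a b. a * b \<in> P \<longrightarrow> a \<in> P \<or> b \<in> P)"

lemma prime_idealD:
  assumes "is_prime_ideal P"
  shows "is_ideal P" "1 \<notin> P" "a * b \<in> P \<Longrightarrow> a \<in> P \<or> b \<in> P"
  using assms unfolding is_prime_ideal_def by blast+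

lemma maximal_ideal_is_prime_ideal:
  assumes m: "is_maximal_ideal m"
  shows "is_prime_ideal m"
  unfolding is_prime_ideal_def
proof (intro conjI allI impI)
  fix a b assume ab: "a * b \<in> m"
  show "a \<in> m \<or> b \<in> m"
  proof (cases "a \<in> m")
    case False
    then obtain u where u: "1 - u * a \<in> m"
      using maximal_ideal_inverse_mod[OF m] by blast
    have "b * (1 - u * a) + u * (a * b) \<in> m"
      using ab u maximal_ideal_is_ideal[OF m] by (meson ideal_add ideal_mult_left)
    moreover have "b * (1 - u * a) + u * (a * b) = b"
      by (simp add: algebra_simps)
    ultimately show ?thesis
      by simp
  qed simp
qed (use m maximal_ideal_is_ideal maximal_ideal_one_notin in auto)

lemma mem_principal_ideal_iff: "x \<in> principal_ideal p \<longleftrightarrow> p dvd x"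
  unfolding principal_ideal_def by (auto simp: dvd_def)

section \<open>Bivariate polynomials\<close>

lemma map_poly_add_hom:
  assumes "\<And>a b. h (a + b) = h a + h b" "h 0 = 0"
  shows "map_poly h (p + q) = map_poly h p + map_poly h q"
  by (intro poly_eqI) (simp add: coeff_map_poly assms)

lemma map_poly_mult_hom:
  fixes h :: "'a::comm_ring_1 \<Rightarrow> 'b::comm_ring_1"
  assumes "\<And>a b. h (a + b) = h a + h b" "\<And>a b. h (a * b) = h a * h b" "h 0 = 0"
  shows "map_poly h (p * q) = map_poly h p * map_poly h q"
proof -
  have "h (sum g A) = (\<Sum>x\<in>A. h (g x))" for g and A :: "nat set"
    by (induction A rule: infinite_finite_induct) (simp_all add: assms)
  then show ?thesis
    by (intro poly_eqI) (simp add: coeff_map_poly coeff_mult assms)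
qed

definition X2 :: "'a::comm_ring_1 poly poly" where
  "X2 = [:[:0, 1:]:]"

definition Y2 :: "'a::comm_ring_1 poly poly" where
  "Y2 = [:0, 1:]"

definition eval2 :: "'a::comm_ring_1 \<Rightarrow> 'a \<Rightarrow> 'a poly poly \<Rightarrow> 'a" where
  "eval2 a b f = poly (poly f [:b:]) a"

lemma eval2_add [simp]: "eval2 a b (f + g) = eval2 a b f + eval2 a b g"
  and eval2_diff [simp]: "eval2 a b (f - g) = eval2 a b f - eval2 a b g"
  and eval2_mult [simp]: "eval2 a b (f * g) = eval2 a b f * eval2 a b g"
  and eval2_0 [simp]: "eval2 a b 0 = 0"
  and eval2_1 [simp]: "eval2 a b 1 = 1"
  and eval2_const2 [simp]: "eval2 a b (const2 c) = c"
  and eval2_X2 [simp]: "eval2 a b X2 = a"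
  and eval2_Y2 [simp]: "eval2 a b Y2 = b"
  by (simp_all add: eval2_def const2_def X2_def Y2_def)

lemma const2_0 [simp]: "const2 0 = 0"
  by (simp add: const2_def)

lemma const2_1 [simp]: "const2 1 = 1"
  by (simp add: const2_def one_pCons)

lemma const2_mult: "const2 (a * b) = const2 a * const2 b"
  by (simp add: const2_def)

lemma const_X_linear: "[:[:- c, 1:]:] = X2 - const2 c"
  by (simp add: X2_def const2_def)

lemma const_Y_linear: "[:[:- c:], 1:] = Y2 - const2 c"
  by (simp add: Y2_def const2_def)

lemma eval2_decomp:
  "\<exists>q r. f = (Y2 - const2 b) * q + (X2 - const2 a) * r + const2 (eval2 a b f)"
proof -
  define g where "g = poly f [:b:]"
  have "f = [:- [:b:], 1:] * synthetic_div f [:b:] + [:g:]"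
    unfolding g_def by (rule synthetic_div_correct'[symmetric])
  also have "[:g:] = [:[:- a, 1:] * synthetic_div g a + [:poly g a:]:]"
    by (simp only: synthetic_div_correct')
  also have "\<dots> = [:[:- a, 1:]:] * [:synthetic_div g a:] + const2 (eval2 a b f)"
    by (simp add: const2_def eval2_def g_def)
  finally have "f = [:[:- b:], 1:] * synthetic_div f [:b:] + [:[:- a, 1:]:] * [:synthetic_div g a:]
      + const2 (eval2 a b f)"
    by (simp only: add.assoc minus_pCons minus_zero)
  then show ?thesis
    unfolding const_X_linear const_Y_linear by blast
qed

definition subst_x :: "'a::comm_ring_1 \<Rightarrow> 'a poly poly \<Rightarrow> 'a poly" where
  "subst_x c f = map_poly (\<lambda>p. poly p c) f"

lemma subst_x_0 [simp]: "subst_x c 0 = 0"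
  and subst_x_add [simp]: "subst_x c (f + g) = subst_x c f + subst_x c g"
  and subst_x_mult [simp]: "subst_x c (f * g) = subst_x c f * subst_x c g"
  and subst_x_1 [simp]: "subst_x c 1 = 1"
  and subst_x_const [simp]: "subst_x c [:p:] = [:poly p c:]"
  unfolding subst_x_def
  by (simp_all add: map_poly_add_hom map_poly_mult_hom map_poly_pCons)

lemma subst_x_diff [simp]: "subst_x c (f - g) = subst_x c f - subst_x c g"
  by (metis add_diff_cancel diff_add_cancel subst_x_add)

lemma coeff_subst_x: "coeff (subst_x c f) n = poly (coeff f n) c"
  by (simp add: subst_x_def coeff_map_poly)

lemma subst_x_eq_0_imp_dvd:
  assumes "subst_x c f = 0"
  shows "X2 - const2 c dvd f"
proof -
  have "coeff f n = [:- c, 1:] * synthetic_div (coeff f n) c" for n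
    using synthetic_div_correct'[of c "coeff f n"] assms
    by (metis add_0_right coeff_0 coeff_subst_x pCons_0_0)
  then have "f = [:[:- c, 1:]:] * map_poly (\<lambda>p. synthetic_div p c) f"
    by (intro poly_eqI) (simp add: coeff_map_poly)
  then show ?thesis
    by (metis const_X_linear dvd_triv_left)
qed

(* The coefficient p\<^sub>i(x) of y\<^sup>i becomes p\<^sub>i(y), and y\<^sup>i becomes x\<^sup>i. *)
definition swap_xy :: "'a::comm_ring_1 poly poly \<Rightarrow> 'a poly poly" where
  "swap_xy f = poly (map_poly (map_poly (\<lambda>c. [:c:])) f) X2"

lemma swap_xy_add [simp]: "swap_xy (f + g) = swap_xy f + swap_xy g"
  and swap_xy_mult [simp]: "swap_xy (f * g) = swap_xy f * swap_xy g"
  and swap_xy_const2 [simp]: "swap_xy (const2 c) = const2 c"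
  and swap_xy_X2 [simp]: "swap_xy X2 = Y2"
  and swap_xy_Y2 [simp]: "swap_xy Y2 = X2"
  unfolding swap_xy_def
  by (simp_all add: map_poly_add_hom map_poly_mult_hom map_poly_pCons const2_def X2_def Y2_def
      flip: one_pCons)

lemma swap_xy_0 [simp]: "swap_xy 0 = 0"
  by (simp add: swap_xy_def)

lemma swap_xy_diff [simp]: "swap_xy (f - g) = swap_xy f - swap_xy g"
  by (metis add_diff_cancel diff_add_cancel swap_xy_add)

lemma ring_hom_fixing_generators_eq_id:
  fixes h :: "'a::comm_ring_1 poly poly \<Rightarrow> 'a poly poly"
  assumes add: "\<And>f g. h (f + g) = h f + h g" and mult: "\<And>f g. h (f * g) = h f * h g"
    and const: "\<And>c. h (const2 c) = const2 c" and "h X2 = X2" "h Y2 = Y2"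
  shows "h f = f"
proof -
  have h_const: "h [:p:] = [:p:]" for p
  proof (induction p)
    case (pCons c p)
    have "[:pCons c p:] = const2 c + X2 * [:p:]"
      by (simp add: const2_def X2_def)
    then show ?case
      by (simp only: add mult const pCons.IH assms(4))
  qed (use const[of 0] in \<open>simp add: const2_def\<close>)
  show ?thesis
  proof (induction f)
    case (pCons p f)
    have "pCons p f = [:p:] + Y2 * f"
      by (simp add: Y2_def)
    then show ?case
      by (simp only: add mult h_const pCons.IH assms(5))
  qed (use h_const[of 0] in simp)
qed

lemma swap_xy_swap_xy [simp]: "swap_xy (swap_xy f) = f"
  by (rule ring_hom_fixing_generators_eq_id[of "\<lambda>f. swap_xy (swap_xy f)"]) simp_all

lemma mem_swap_xy_image_iff: "f \<in> swap_xy ` A \<longleftrightarrow> swap_xy f \<in> A"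
  by (metis image_iff swap_xy_swap_xy)

lemma swap_xy_1 [simp]: "swap_xy 1 = 1"
  using swap_xy_const2[of 1] by (simp add: const2_def flip: one_pCons)

lemma swap_xy_ideal: "is_ideal I \<Longrightarrow> is_ideal (swap_xy ` I)"
  by (auto simp: is_ideal_def mem_swap_xy_image_iff)

lemma swap_xy_prime_ideal:
  assumes "is_prime_ideal P"
  shows "is_prime_ideal (swap_xy ` P)"
proof -
  have "is_ideal (swap_xy ` P)"
    using prime_idealD(1)[OF assms] by (rule swap_xy_ideal)
  then show ?thesis
    using prime_idealD[OF assms] by (auto simp: is_prime_ideal_def mem_swap_xy_image_iff)
qed

lemma swap_xy_maximal_ideal:
  assumes "is_maximal_ideal m"
  shows "is_maximal_ideal (swap_xy ` m)"
proof -
  have m: "is_ideal m" "1 \<notin> m" "\<And>a. a \<notin> m \<Longrightarrow> \<exists>u. 1 - u * a \<in> m"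
    using assms unfolding maximal_ideal_iff_inverse_mod by auto
  have "\<exists>u. 1 - u * a \<in> swap_xy ` m" if a: "a \<notin> swap_xy ` m" for a
  proof -
    obtain u where "1 - u * swap_xy a \<in> m"
      using m(3)[of "swap_xy a"] a by (auto simp: mem_swap_xy_image_iff)
    then have "1 - swap_xy u * a \<in> swap_xy ` m"
      by (simp add: mem_swap_xy_image_iff)
    then show ?thesis ..
  qed
  with m show ?thesis
    unfolding maximal_ideal_iff_inverse_mod by (simp add: swap_xy_ideal mem_swap_xy_image_iff)
qed

lemma swap_xy_dvd: "g dvd f \<Longrightarrow> swap_xy g dvd swap_xy f"
  by (elim dvdE) simp

lemma swap_xy_principal_ideal: "swap_xy ` principal_ideal g = principal_ideal (swap_xy g)"
proof (intro equalityI subsetI)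
  fix f assume "f \<in> swap_xy ` principal_ideal g"
  then obtain h where "f = swap_xy h" "g dvd h"
    by (auto simp: mem_principal_ideal_iff)
  then show "f \<in> principal_ideal (swap_xy g)"
    by (simp add: mem_principal_ideal_iff swap_xy_dvd)
next
  fix f assume "f \<in> principal_ideal (swap_xy g)"
  then have "g dvd swap_xy f"
    using swap_xy_dvd[of "swap_xy g" f] by (simp add: mem_principal_ideal_iff)
  then show "f \<in> swap_xy ` principal_ideal g"
    by (simp add: mem_swap_xy_image_iff mem_principal_ideal_iff)
qed

section \<open>Prime ideals of K[x,y] and the Nullstellensatz\<close>

lemma prime_ideal_const2_notin:
  fixes P :: "'a::field poly poly set"
  assumes "is_prime_ideal P" "c \<noteq> 0"
  shows "const2 c \<notin> P"
proof
  assume "const2 c \<in> P"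
  then have "const2 (inverse c) * const2 c \<in> P"
    using assms(1) by (meson ideal_mult_left prime_idealD(1))
  then show False
    using assms by (simp add: const2_def prime_idealD(2) flip: one_pCons)
qed

lemma alg_closed_poly_induct [consumes 1, case_names const linear]:
  fixes p :: "'a::alg_closed_field poly"
  assumes "p \<noteq> 0"
    and const: "\<And>c. c \<noteq> 0 \<Longrightarrow> P [:c:]"
    and linear: "\<And>c q. q \<noteq> 0 \<Longrightarrow> P q \<Longrightarrow> P ([:- c, 1:] * q)"
  shows "P p"
  using assms(1)
proof (induction "degree p" arbitrary: p rule: less_induct)
  case less
  show ?case
  proof (cases "degree p = 0")
    case True
    then show ?thesis
      using less.prems const by (metis degree_eq_zeroE pCons_0_0)
  next
    case False
    then obtain c where "poly p c = 0"
      using alg_closed_imp_poly_has_root by blast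
    then obtain q where p: "p = [:- c, 1:] * q"
      by (metis dvdE poly_eq_0_iff_dvd)
    with less.prems have "q \<noteq> 0"
      by auto
    then have "degree q < degree p"
      unfolding p by (subst degree_mult_eq) auto
    then show ?thesis
      using less.hyps \<open>q \<noteq> 0\<close> linear p by blast
  qed
qed

lemma X_linear_times_const: "[:[:- c, 1:] * q:] = (X2 - const2 c) * [:q:]"
  by (simp add: X2_def const2_def)

lemma X_linear_nonzero [simp]: "X2 - const2 c \<noteq> (0 :: 'a::comm_ring_1 poly poly)"
  by (simp add: X2_def const2_def)

lemma subst_x_X_linear [simp]: "subst_x c (X2 - const2 c) = 0"
  by (simp add: X2_def const2_def)

lemma prime_ideal_contains_X_linear:
  fixes P :: "'a::alg_closed_field poly poly set"
  assumes P: "is_prime_ideal P" and "[:d:] \<in> P" "d \<noteq> 0"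
  shows "\<exists>c. X2 - const2 c \<in> P"
  using assms(3,2)
proof (induction d rule: alg_closed_poly_induct)
  case (const c)
  then show ?case
    using prime_ideal_const2_notin[OF P] by (simp add: const2_def)
next
  case (linear c q)
  then show ?case
    using prime_idealD(3)[OF P] by (metis X_linear_times_const)
qed

lemma dvd_cancel_X_linear:
  fixes g h :: "'a::idom poly poly"
  assumes "subst_x c g \<noteq> 0" "g dvd (X2 - const2 c) * h"
  shows "g dvd h"
proof -
  obtain w where w: "(X2 - const2 c) * h = g * w"
    using assms(2) by (elim dvdE)
  then have "subst_x c g * subst_x c w = 0"
    by (metis mult_zero_left subst_x_X_linear subst_x_mult)
  then have "subst_x c w = 0"
    using assms(1) by simp
  then have "X2 - const2 c dvd w"
    by (rule subst_x_eq_0_imp_dvd)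
  then obtain w' where "w = (X2 - const2 c) * w'"
    by (elim dvdE)
  with w have "h = g * w'"
    by (metis X_linear_nonzero mult.left_commute mult_left_cancel)
  then show ?thesis ..
qed

lemma dvd_cancel_x_poly:
  fixes g h :: "'a::alg_closed_field poly poly"
  assumes "\<And>c. subst_x c g \<noteq> 0" "d \<noteq> 0" "g dvd [:d:] * h"
  shows "g dvd h"
  using assms(2,3)
proof (induction d arbitrary: h rule: alg_closed_poly_induct)
  case (const c)
  have "const2 (inverse c) * const2 c = 1"
    using const.hyps by (metis const2_1 const2_mult left_inverse)
  then have "h = const2 (inverse c) * (const2 c * h)"
    by (simp only: mult.assoc[symmetric] mult_1_left)
  moreover have "g dvd const2 c * h"
    using const.prems by (simp only: const2_def)
  ultimately show ?case
    by (metis dvd_mult)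
next
  case (linear c q)
  have "g dvd (X2 - const2 c) * ([:q:] * h)"
    using linear.prems by (simp only: X_linear_times_const mult.assoc)
  then have "g dvd [:q:] * h"
    by (rule dvd_cancel_X_linear[OF assms(1)])
  then show ?case
    by (rule linear.IH)
qed

lemma ideal_min_degree_element_dvd:
  fixes g h :: "'a::alg_closed_field poly poly"
  assumes ideal: "is_ideal I"
    and g: "g \<in> I" "g \<noteq> 0" "\<And>f. f \<in> I \<Longrightarrow> f \<noteq> 0 \<Longrightarrow> degree g \<le> degree f"
    and no_linear: "\<And>c. subst_x c g \<noteq> 0" and h: "h \<in> I"
  shows "g dvd h"
proof -
  obtain q r where qr: "pseudo_divmod h g = (q, r)"
    by (metis surj_pair)
  define c where "c = lead_coeff g ^ (Suc (degree h) - degree g)"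
  have c: "c \<noteq> 0"
    using g(2) by (simp add: c_def)
  have div: "smult c h = g * q + r" "r = 0 \<or> degree r < degree g"
    using pseudo_divmod[OF g(2) qr] by (simp_all add: c_def)
  then have "r = [:c:] * h - g * q"
    by simp
  also have "\<dots> \<in> I"
    using h g(1) ideal by (meson ideal_diff ideal_mult_left ideal_mult_right)
  finally have "r = 0"
    using div(2) g(3)[of r] by fastforce
  with div(1) have "g dvd [:c:] * h"
    by simp
  then show ?thesis
    using dvd_cancel_x_poly[OF no_linear c] by blast
qed

(* Minimise the y-degree and then the x-degree of the leading coefficient: a factor x - c
   of such an element could be cancelled inside P, lowering the latter. *)
lemma prime_ideal_min_element_without_X_linear_factor:
  fixes P :: "'a::alg_closed_field poly poly set"
  assumes P: "is_prime_ideal P" and no_x: "\<And>d. [:d:] \<in> P \<Longrightarrow> d = 0" and "P \<noteq> {0}"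
  obtains g where "g \<in> P" "g \<noteq> 0" "\<And>f. f \<in> P \<Longrightarrow> f \<noteq> 0 \<Longrightarrow> degree g \<le> degree f"
    "\<And>c. subst_x c g \<noteq> 0"
proof -
  obtain g0 where "g0 \<in> P - {0}"
    using assms(3) ideal_zero[OF prime_idealD(1)[OF P]] by blast
  then obtain g1 where g1: "g1 \<in> P - {0}" "\<And>f. f \<in> P - {0} \<Longrightarrow> degree g1 \<le> degree f"
    using ex_has_least_nat[of "\<lambda>f. f \<in> P - {0}" g0 degree] by blast
  then obtain g where g: "g \<in> P - {0}" "degree g = degree g1"
    and g_min: "\<And>f. f \<in> P - {0} \<Longrightarrow> degree f = degree g1 \<Longrightarrow>
        degree (lead_coeff g) \<le> degree (lead_coeff f)"
    using ex_has_least_nat[of "\<lambda>f. f \<in> P - {0} \<and> degree f = degree g1" g1 "\<lambda>f. degree (lead_coeff f)"]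
    by blast
  have no_linear: "subst_x c g \<noteq> 0" for c
  proof
    assume "subst_x c g = 0"
    then have "X2 - const2 c dvd g"
      by (rule subst_x_eq_0_imp_dvd)
    then obtain f where f: "g = [:[:- c, 1:]:] * f"
      by (auto simp flip: const_X_linear)
    have "[:[:- c, 1:]:] \<notin> P"
      using no_x[of "[:- c, 1:]"] by auto
    moreover have "[:[:- c, 1:]:] * f \<in> P"
      using g(1) f by blast
    ultimately have "f \<in> P"
      using prime_idealD(3)[OF P] by blast
    moreover have "f \<noteq> 0"
      using g(1) f by auto
    ultimately have f_in: "f \<in> P - {0}"
      by blast
    then have "degree f = degree g1"
      using g(2) unfolding f by (simp add: degree_mult_eq)
    moreover have "degree (lead_coeff g) = Suc (degree (lead_coeff f))"
      using f_in unfolding f lead_coeff_mult by (subst degree_mult_eq) auto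
    ultimately show False
      using g_min[OF f_in] by simp
  qed
  show ?thesis
  proof (rule that)
    show "g \<in> P" "g \<noteq> 0"
      using g(1) by auto
    show "degree g \<le> degree f" if "f \<in> P" "f \<noteq> 0" for f
      using g(2) g1(2) that by simp
  qed (rule no_linear)
qed

lemma prime_ideal_principal_if_no_x_poly:
  fixes P :: "'a::alg_closed_field poly poly set"
  assumes P: "is_prime_ideal P" and no_x: "\<And>d. [:d:] \<in> P \<Longrightarrow> d = 0"
  shows "\<exists>g. P = principal_ideal g"
proof (cases "P = {0}")
  case True
  then show ?thesis
    by (intro exI[of _ 0]) (auto simp: mem_principal_ideal_iff)
next
  case False
  have ideal: "is_ideal P"
    using P by (rule prime_idealD)
  obtain g where g: "g \<in> P" "g \<noteq> 0" "\<And>f. f \<in> P \<Longrightarrow> f \<noteq> 0 \<Longrightarrow> degree g \<le> degree f"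
    and no_linear: "\<And>c. subst_x c g \<noteq> 0"
    using prime_ideal_min_element_without_X_linear_factor[OF P no_x False] by blast
  have dvd: "g dvd h" if "h \<in> P" for h
    using ideal g no_linear that by (rule ideal_min_degree_element_dvd)
  have "P = principal_ideal g"
  proof
    show "P \<subseteq> principal_ideal g"
      using dvd by (auto simp: mem_principal_ideal_iff)
    show "principal_ideal g \<subseteq> P"
    proof
      fix x assume "x \<in> principal_ideal g"
      then obtain r where "x = g * r"
        unfolding mem_principal_ideal_iff by (elim dvdE)
      then show "x \<in> P"
        using ideal g(1) by (simp add: ideal_mult_right)
    qed
  qed
  then show ?thesis ..
qed

lemma maximal_ideal_contains_X_linear:
  fixes m :: "'a::{alg_closed_field, field_char_0} poly poly set"
  assumes m: "is_maximal_ideal m"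
  shows "\<exists>c. X2 - const2 c \<in> m"
proof (cases "\<exists>d. d \<noteq> 0 \<and> [:d:] \<in> m")
  case True
  then show ?thesis
    using prime_ideal_contains_X_linear[OF maximal_ideal_is_prime_ideal[OF m]] by blast
next
  case False
  (* Then m = (g). Specialising x := c in 1 - u (x - c) \<in> (g) makes g(c, y) a unit, and for
     c off the roots of the leading coefficient it has the same degree as g, so g \<in> K[x]. *)
  then obtain g where g: "m = principal_ideal g"
    using prime_ideal_principal_if_no_x_poly[OF maximal_ideal_is_prime_ideal[OF m]] by blast
  obtain c where c: "g \<noteq> 0 \<Longrightarrow> poly (lead_coeff g) c \<noteq> 0"
    using poly_roots_finite[of "lead_coeff g"] ex_new_if_finite[OF infinite_UNIV_char_0] by auto
  have "X2 - const2 c \<notin> m"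
    using False by (metis const_X_linear pCons_eq_0_iff zero_neq_one)
  then obtain u where "1 - u * (X2 - const2 c) \<in> m"
    using maximal_ideal_inverse_mod[OF m] by blast
  then obtain w where "1 - u * (X2 - const2 c) = g * w"
    unfolding g mem_principal_ideal_iff by (elim dvdE)
  then have "subst_x c g * subst_x c w = 1"
    by (metis diff_zero mult_zero_right subst_x_1 subst_x_X_linear subst_x_diff subst_x_mult)
  then have unit: "is_unit (subst_x c g)"
    by (metis dvdI)
  then have "g \<noteq> 0"
    by (metis not_is_unit_0 subst_x_0)
  have "degree (subst_x c g) = 0"
    using unit by (metis is_unit_iff_degree not_is_unit_0)
  moreover have "degree g \<le> degree (subst_x c g)"
    using c \<open>g \<noteq> 0\<close> by (intro le_degree) (simp add: coeff_subst_x)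
  ultimately have "degree g = 0"
    by simp
  then obtain d where "g = [:d:]"
    by (rule degree_eq_zeroE)
  moreover have "d \<noteq> 0"
    using \<open>g \<noteq> 0\<close> \<open>g = [:d:]\<close> by simp
  moreover have "g \<in> m"
    unfolding g mem_principal_ideal_iff by simp
  ultimately show ?thesis
    using False by blast
qed

lemma maximal_ideal_eq_point_ideal:
  fixes m :: "'a::{alg_closed_field, field_char_0} poly poly set"
  assumes m: "is_maximal_ideal m"
  obtains a b where "m = {f. eval2 a b f = 0}"
proof -
  have ideal: "is_ideal m"
    using m by (rule maximal_ideal_is_ideal)
  obtain a where a: "X2 - const2 a \<in> m"
    using maximal_ideal_contains_X_linear[OF m] by blast
  obtain b where "X2 - const2 b \<in> swap_xy ` m"
    using maximal_ideal_contains_X_linear[OF swap_xy_maximal_ideal[OF m]] by blast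
  then have b: "Y2 - const2 b \<in> m"
    by (simp add: mem_swap_xy_image_iff)
  have "f \<in> m \<longleftrightarrow> eval2 a b f = 0" for f
  proof -
    define e where "e = eval2 a b f"
    obtain q r where "f = (Y2 - const2 b) * q + (X2 - const2 a) * r + const2 e"
      unfolding e_def using eval2_decomp by blast
    moreover have "(Y2 - const2 b) * q + (X2 - const2 a) * r \<in> m"
      using a b ideal by (meson ideal_add ideal_mult_right)
    ultimately obtain s where f: "f = s + const2 e" and s: "s \<in> m"
      by blast
    have "f \<in> m \<longleftrightarrow> const2 e \<in> m"
      using ideal_add[OF ideal s, of "const2 e"] ideal_diff[OF ideal _ s, of f] unfolding f by auto
    also have "\<dots> \<longleftrightarrow> e = 0"
      using prime_ideal_const2_notin[OF maximal_ideal_is_prime_ideal[OF m]] ideal_zero[OF ideal]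
      by (cases "e = 0") auto
    finally show ?thesis
      unfolding e_def .
  qed
  then show ?thesis
    using that by blast
qed

section \<open>Derivations and the Taylor map\<close>

lemma derivation_add: "is_derivation D \<Longrightarrow> D (f + g) = D f + D g"
  unfolding is_derivation_def by blast

lemma derivation_mult: "is_derivation D \<Longrightarrow> D (f * g) = g * D f + f * D g"
  unfolding is_derivation_def by blast

lemma derivation_diff: "is_derivation D \<Longrightarrow> D (f - g) = D f - D g"
  by (metis add_diff_cancel derivation_add diff_add_cancel)

lemma derivation_const2:
  assumes D: "is_derivation D"
  shows "D (const2 c) = 0"
proof -
  have "D 1 = 0"
    using derivation_mult[OF D, of 1 1] by simp
  then show ?thesis
    using D unfolding is_derivation_def by (metis mult.right_neutral mult_zero_right)
qed

lemma derivation_minus_const2: "is_derivation D \<Longrightarrow> D (f - const2 c) = D f"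
  by (simp add: derivation_diff derivation_const2)

lemma derivation_point_ideal_stable:
  assumes D: "is_derivation D" and "eval2 a b (D X2) = 0" "eval2 a b (D Y2) = 0"
  shows "D ` {f. eval2 a b f = 0} \<subseteq> {f. eval2 a b f = 0}"
proof clarify
  fix f assume "eval2 a b f = 0"
  then obtain q r where "f = (Y2 - const2 b) * q + (X2 - const2 a) * r"
    using eval2_decomp[of f b a] by auto
  then have "D f = q * D Y2 + (Y2 - const2 b) * D q + (r * D X2 + (X2 - const2 a) * D r)"
    by (simp add: derivation_add[OF D] derivation_mult[OF D] derivation_minus_const2[OF D])
  then show "eval2 a b (D f) = 0"
    using assms by simp
qed

definition taylor :: "('a::field_char_0 poly poly \<Rightarrow> 'a poly poly) \<Rightarrow> 'a \<Rightarrow> 'a \<Rightarrow> 'a poly poly \<Rightarrow> 'a fps"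
  where "taylor D a b f = Abs_fps (\<lambda>k. eval2 a b ((D ^^ k) f) / fact k)"

lemma fps_nth_taylor [simp]: "fps_nth (taylor D a b f) k = eval2 a b ((D ^^ k) f) / fact k"
  by (simp add: taylor_def)

lemma taylor_add:
  assumes D: "is_derivation D"
  shows "taylor D a b (f + g) = taylor D a b f + taylor D a b g"
proof -
  have "(D ^^ k) (f + g) = (D ^^ k) f + (D ^^ k) g" for k
    by (induction k) (simp_all add: derivation_add[OF D])
  then show ?thesis
    by (intro fps_ext) (simp add: add_divide_distrib)
qed

lemma taylor_diff: "is_derivation D \<Longrightarrow> taylor D a b (f - g) = taylor D a b f - taylor D a b g"
  by (metis add_diff_cancel diff_add_cancel taylor_add)

lemma fps_deriv_taylor: "fps_deriv (taylor D a b f) = taylor D a b (D f)"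
  by (intro fps_ext) (simp add: funpow_Suc_right del: funpow.simps of_nat_Suc)

lemma taylor_mult:
  assumes D: "is_derivation D"
  shows "taylor D a b (f * g) = taylor D a b f * taylor D a b g"
proof (rule fps_ext)
  (* Induction on the coefficient: constant terms agree, and by the Leibniz rule both sides
     have the same derivative. *)
  have Suc_coeff: "fps_nth A (Suc k) = fps_nth (fps_deriv A) k / of_nat (Suc k)" for A :: "'a fps" and k
    by (simp del: of_nat_Suc)
  show "fps_nth (taylor D a b (f * g)) k = fps_nth (taylor D a b f * taylor D a b g) k" for k
  proof (induction k arbitrary: f g)
    case (Suc k)
    have "fps_nth (taylor D a b (D (f * g))) k
        = fps_nth (taylor D a b g * taylor D a b (D f) + taylor D a b f * taylor D a b (D g)) k"
      by (simp only: derivation_mult[OF D] taylor_add[OF D] fps_add_nth Suc.IH)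
    also have "\<dots> = fps_nth (fps_deriv (taylor D a b f * taylor D a b g)) k"
      by (simp only: fps_deriv_mult fps_deriv_taylor add.commute mult.commute)
    finally show ?case
      by (simp only: Suc_coeff fps_deriv_taylor)
  qed simp
qed

definition taylor_kernel :: "('a::field_char_0 poly poly \<Rightarrow> 'a poly poly) \<Rightarrow> 'a \<Rightarrow> 'a \<Rightarrow> 'a poly poly set"
  where "taylor_kernel D a b = {f. taylor D a b f = 0}"

lemma taylor_kernel_prime_ideal:
  assumes D: "is_derivation D"
  shows "is_prime_ideal (taylor_kernel D a b)"
proof -
  have "taylor D a b 0 = 0"
    using taylor_add[OF D, of a b 0 0] by simp
  moreover have "taylor D a b 1 \<noteq> 0"
  proof
    assume "taylor D a b 1 = 0"
    then have "fps_nth (taylor D a b 1) 0 = 0"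
      by simp
    then show False
      by simp
  qed
  ultimately show ?thesis
    unfolding is_prime_ideal_def is_ideal_def taylor_kernel_def
    by (simp add: taylor_add[OF D] taylor_mult[OF D] del: fps_nth_taylor)
qed

lemma taylor_kernel_point_ideal:
  assumes "f \<in> taylor_kernel D a b"
  shows "eval2 a b f = 0"
proof -
  have "fps_nth (taylor D a b f) 0 = 0"
    using assms by (simp add: taylor_kernel_def)
  then show ?thesis
    by simp
qed

lemma taylor_kernel_derivation_stable:
  assumes "f \<in> taylor_kernel D a b"
  shows "D f \<in> taylor_kernel D a b"
proof -
  have "fps_deriv (taylor D a b f) = 0"
    using assms by (simp add: taylor_kernel_def)
  then show ?thesis
    by (simp add: taylor_kernel_def fps_deriv_taylor)
qed

lemma taylor_nonzero_if_derivative_at_point: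
  assumes "eval2 a b (D f) \<noteq> 0"
  shows "taylor D a b f \<noteq> 0"
proof
  assume "taylor D a b f = 0"
  then have "fps_nth (taylor D a b f) 1 = 0"
    by simp
  with assms show False
    by simp
qed

lemma taylor_kernel_principal:
  fixes D :: "'a::{alg_closed_field, field_char_0} poly poly \<Rightarrow> 'a poly poly"
  assumes D: "is_derivation D" and "eval2 a b (D X2) \<noteq> 0 \<or> eval2 a b (D Y2) \<noteq> 0"
  shows "\<exists>p. taylor_kernel D a b = principal_ideal p"
  using assms(2)
proof
  assume DX: "eval2 a b (D X2) \<noteq> 0"
  have "X2 - const2 c \<notin> taylor_kernel D a b" for c
    using DX taylor_nonzero_if_derivative_at_point[of a b D "X2 - const2 c"]
    by (simp add: taylor_kernel_def derivation_minus_const2[OF D])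
  then have "d = 0" if "[:d:] \<in> taylor_kernel D a b" for d
    using that prime_ideal_contains_X_linear[OF taylor_kernel_prime_ideal[OF D]] by blast
  then show ?thesis
    using prime_ideal_principal_if_no_x_poly[OF taylor_kernel_prime_ideal[OF D]] by blast
next
  assume DY: "eval2 a b (D Y2) \<noteq> 0"
  let ?J = "swap_xy ` taylor_kernel D a b"
  have J: "is_prime_ideal ?J"
    using swap_xy_prime_ideal[OF taylor_kernel_prime_ideal[OF D]] .
  have "X2 - const2 c \<notin> ?J" for c
    using DY taylor_nonzero_if_derivative_at_point[of a b D "Y2 - const2 c"]
    by (simp add: mem_swap_xy_image_iff taylor_kernel_def derivation_minus_const2[OF D])
  then have "d = 0" if "[:d:] \<in> ?J" for d
    using that prime_ideal_contains_X_linear[OF J] by blast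
  then obtain g where g: "?J = principal_ideal g"
    using prime_ideal_principal_if_no_x_poly[OF J] by blast
  have "taylor_kernel D a b = swap_xy ` ?J"
    by (simp add: image_image)
  also have "\<dots> = principal_ideal (swap_xy g)"
    unfolding g by (rule swap_xy_principal_ideal)
  finally show ?thesis ..
qed

lemma K_alg_aut_diff:
  assumes "is_K_alg_aut r"
  shows "r (f - g) = r f - r g"
proof -
  have "r (f - g) + r g = r f"
    using assms unfolding is_K_alg_aut_def by (metis diff_add_cancel)
  then show ?thesis
    by (simp add: eq_diff_eq)
qed

lemma eval2_K_alg_aut_eq:
  assumes r: "is_K_alg_aut r" and fixed: "r ` {f. eval2 a b f = 0} = {f. eval2 a b f = 0}"
  shows "eval2 a b (r f) = eval2 a b f"
proof -
  have "f - const2 (eval2 a b f) \<in> {f. eval2 a b f = 0}"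
    by simp
  then have "r (f - const2 (eval2 a b f)) \<in> r ` {f. eval2 a b f = 0}"
    by (rule imageI)
  then have "r (f - const2 (eval2 a b f)) \<in> {f. eval2 a b f = 0}"
    by (simp only: fixed)
  then show ?thesis
    using r by (simp add: K_alg_aut_diff is_K_alg_aut_def)
qed

lemma taylor_Aut_der_invariant:
  assumes "\<rho> \<in> Aut_der D" and fixed: "\<rho> ` {f. eval2 a b f = 0} = {f. eval2 a b f = 0}"
  shows "taylor D a b (\<rho> f) = taylor D a b f"
proof -
  have aut: "is_K_alg_aut \<rho>" and comm: "\<rho> \<circ> D = D \<circ> \<rho>"
    using assms(1) by (auto simp: Aut_der_def)
  have "D (\<rho> g) = \<rho> (D g)" for g
    using comm by (metis comp_apply)
  then have "(D ^^ k) (\<rho> f) = \<rho> ((D ^^ k) f)" for k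
    by (induction k) simp_all
  then show ?thesis
    by (intro fps_ext) (simp add: eval2_K_alg_aut_eq[OF aut fixed])
qed

lemma taylor_kernel_Aut_der:
  assumes D: "is_derivation D" and "\<rho> \<in> Aut_der D"
    and fixed: "\<rho> ` {f. eval2 a b f = 0} = {f. eval2 a b f = 0}"
  shows "\<rho> ` taylor_kernel D a b = taylor_kernel D a b" "\<rho> g - g \<in> taylor_kernel D a b"
proof -
  have invariant: "taylor D a b (\<rho> f) = taylor D a b f" for f
    using taylor_Aut_der_invariant[OF assms(2) fixed] .
  have "surj \<rho>"
    using assms(2) by (simp add: Aut_der_def is_K_alg_aut_def bij_is_surj)
  show "\<rho> ` taylor_kernel D a b = taylor_kernel D a b"
  proof (intro equalityI subsetI)
    fix f assume "f \<in> \<rho> ` taylor_kernel D a b"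
    then show "f \<in> taylor_kernel D a b"
      using invariant by (auto simp: taylor_kernel_def)
  next
    fix f assume f: "f \<in> taylor_kernel D a b"
    obtain h where "f = \<rho> h"
      using \<open>surj \<rho>\<close> by (metis surjD)
    with f show "f \<in> \<rho> ` taylor_kernel D a b"
      using invariant by (auto simp: taylor_kernel_def)
  qed
  show "\<rho> g - g \<in> taylor_kernel D a b"
    by (simp add: taylor_kernel_def taylor_diff[OF D] invariant)
qed

theorem lemma2p1:
  fixes D \<rho> :: "'a::{alg_closed_field, field_char_0} poly poly \<Rightarrow> 'a poly poly"
    and m :: "'a poly poly set"
  assumes "is_derivation D"
    and "\<rho> \<in> Aut_der D"
    and "is_maximal_ideal m"
    and "\<rho> ` m = m"
    and "\<not> (D ` m \<subseteq> m)"
  shows "\<exists>p. principal_ideal p \<subseteq> m \<and>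
            D ` principal_ideal p \<subseteq> principal_ideal p \<and>
            \<rho> ` principal_ideal p = principal_ideal p \<and>
            (\<forall>g. \<rho> g - g \<in> principal_ideal p)"
proof -
  obtain a b where m: "m = {f. eval2 a b f = 0}"
    using maximal_ideal_eq_point_ideal[OF assms(3)] .
  have "eval2 a b (D X2) \<noteq> 0 \<or> eval2 a b (D Y2) \<noteq> 0"
    using assms(5) derivation_point_ideal_stable[OF assms(1)] unfolding m by blast
  then obtain p where J: "taylor_kernel D a b = principal_ideal p"
    using taylor_kernel_principal[OF assms(1)] by blast
  have "taylor_kernel D a b \<subseteq> m" "D ` taylor_kernel D a b \<subseteq> taylor_kernel D a b"
    unfolding m using taylor_kernel_point_ideal taylor_kernel_derivation_stable by blast+
  moreover have "\<rho> ` taylor_kernel D a b = taylor_kernel D a b" "\<rho> g - g \<in> taylor_kernel D a b" for g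
    using taylor_kernel_Aut_der[OF assms(1,2) assms(4)[unfolded m]] by blast+
  ultimately show ?thesis
    unfolding J by blast
qed

end
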